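(* (Flow extension lemma.) Let $\Sigma=(V,E)$ be a finite directed network in which every edge has capacity $1$, which is inner-superbalanced, and whose boundary is partitioned as $\partial\Sigma=B_1\sqcup B_2\sqcup B_3$ with $S(B_1)=0$. Let $v$ be a $\{0,1\}$-valued flow that is reachable from $B_1$. Then there exists a $\{0,1\}$-valued flow $\tilde v$ extending $v$ (i.e. $\tilde v^e\ge v^e$ for every edge $e$) such that $\tilde v-v$ is a max flow on $B_2$. Furthermore, $\tilde v$ can be chosen so that $\tilde v-v$ is a collection of $S(B_2)$ edge-disjoint directed paths from $B_2$ to $B_2^c=\partial\Sigma\setminus B_2$, and in particular $\tilde v$ is reachable from $B_1\sqcup B_2$.
   Context: For a directed edge $e$, $s(e)$ and $t(e)$ denote its source and target. A flow on a directed network with capacities $c$ is a function $v:E\to\mathbb R_{\ge0}$ with $v^e\le c^e$ and, at every non-boundary vertex $x$, $\sum_{e:t(e)=x}v^e=\sum_{e:s(e)=x}v^e$. The flux of $v$ out of $A\subset\partial\Sigma$ is $S(A;v)=\sum_{e:s(e)\in A}v^e-\sum_{e:t(e)\in A}v^e$, and $S(A)$ is the maximum flux out of $A$ over all flows; a max flow on $A$ is a flow attaining it. A network is inner-superbalanced if at each non-boundary vertex the total capacity of incoming edges is at most that of outgoing edges. A $\{0,1\}$-valued flow $v$ is reachable from a boundary set $A$ if for every edge $e$ with $v^e\neq0$ there is a directed path, all of whose edges have $v$-value $1$, from a vertex of $A$ to $s(e)$. *)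

theory Defs
  imports Complex_Main
begin

text \<open>A finite directed network: vertex set V, edge set E (multi-edges and loops allowed,
edges are abstract), source map s, target map t, boundary Bd \<subseteq> V.
All capacities equal 1.\<close>

definition network :: "'v set \<Rightarrow> 'e set \<Rightarrow> ('e \<Rightarrow> 'v) \<Rightarrow> ('e \<Rightarrow> 'v) \<Rightarrow> 'v set \<Rightarrow> bool" where
  "network V E s t Bd \<longleftrightarrow> finite V \<and> finite E \<and> Bd \<subseteq> V \<and> (\<forall>e\<in>E. s e \<in> V \<and> t e \<in> V)"

definition is_flow :: "'v set \<Rightarrow> 'e set \<Rightarrow> ('e \<Rightarrow> 'v) \<Rightarrow> ('e \<Rightarrow> 'v) \<Rightarrow> 'v set \<Rightarrow> ('e \<Rightarrow> real) \<Rightarrow> bool" where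
  "is_flow V E s t Bd f \<longleftrightarrow>
     (\<forall>e\<in>E. 0 \<le> f e \<and> f e \<le> 1) \<and>
     (\<forall>x\<in>V - Bd. (\<Sum>e\<in>{e\<in>E. t e = x}. f e) = (\<Sum>e\<in>{e\<in>E. s e = x}. f e))"

definition inner_superbalanced :: "'v set \<Rightarrow> 'e set \<Rightarrow> ('e \<Rightarrow> 'v) \<Rightarrow> ('e \<Rightarrow> 'v) \<Rightarrow> 'v set \<Rightarrow> bool" where
  "inner_superbalanced V E s t Bd \<longleftrightarrow>
     (\<forall>x\<in>V - Bd. (\<Sum>e\<in>{e\<in>E. t e = x}. (1::real)) \<le> (\<Sum>e\<in>{e\<in>E. s e = x}. (1::real)))"

definition flux :: "'e set \<Rightarrow> ('e \<Rightarrow> 'v) \<Rightarrow> ('e \<Rightarrow> 'v) \<Rightarrow> 'v set \<Rightarrow> ('e \<Rightarrow> real) \<Rightarrow> real" where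
  "flux E s t A f = (\<Sum>e\<in>{e\<in>E. s e \<in> A}. f e) - (\<Sum>e\<in>{e\<in>E. t e \<in> A}. f e)"

definition maxflux :: "'v set \<Rightarrow> 'e set \<Rightarrow> ('e \<Rightarrow> 'v) \<Rightarrow> ('e \<Rightarrow> 'v) \<Rightarrow> 'v set \<Rightarrow> 'v set \<Rightarrow> real" where
  "maxflux V E s t Bd A = Sup {flux E s t A f | f. is_flow V E s t Bd f}"

definition is_max_flow :: "'v set \<Rightarrow> 'e set \<Rightarrow> ('e \<Rightarrow> 'v) \<Rightarrow> ('e \<Rightarrow> 'v) \<Rightarrow> 'v set \<Rightarrow> 'v set \<Rightarrow> ('e \<Rightarrow> real) \<Rightarrow> bool" where
  "is_max_flow V E s t Bd A f \<longleftrightarrow> is_flow V E s t Bd f \<and> flux E s t A f = maxflux V E s t Bd A"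

definition zero_one :: "'e set \<Rightarrow> ('e \<Rightarrow> real) \<Rightarrow> bool" where
  "zero_one E f \<longleftrightarrow> (\<forall>e\<in>E. f e = 0 \<or> f e = 1)"

fun walk :: "'e set \<Rightarrow> ('e \<Rightarrow> 'v) \<Rightarrow> ('e \<Rightarrow> 'v) \<Rightarrow> 'v \<Rightarrow> 'e list \<Rightarrow> 'v \<Rightarrow> bool" where
  "walk E s t a [] b \<longleftrightarrow> a = b"
| "walk E s t a (e # es) b \<longleftrightarrow> e \<in> E \<and> s e = a \<and> walk E s t (t e) es b"

definition dpath :: "'e set \<Rightarrow> ('e \<Rightarrow> 'v) \<Rightarrow> ('e \<Rightarrow> 'v) \<Rightarrow> 'v \<Rightarrow> 'e list \<Rightarrow> 'v \<Rightarrow> bool" where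
  "dpath E s t a es b \<longleftrightarrow> walk E s t a es b \<and> distinct (a # map t es)"

definition reachable_from :: "'v set \<Rightarrow> 'e set \<Rightarrow> ('e \<Rightarrow> 'v) \<Rightarrow> ('e \<Rightarrow> 'v) \<Rightarrow> 'v set \<Rightarrow> 'v set \<Rightarrow> ('e \<Rightarrow> real) \<Rightarrow> bool" where
  "reachable_from V E s t Bd A f \<longleftrightarrow> is_flow V E s t Bd f \<and> zero_one E f \<and>
     (\<forall>e\<in>E. f e \<noteq> 0 \<longrightarrow>
        (\<exists>a\<in>A. \<exists>es. dpath E s t a es (s e) \<and> (\<forall>d\<in>set es. f d = 1)))"

end

theory Submission
  imports Defs "HOL-Library.Indicator_Function" "HOL-Library.Disjoint_Sets"
begin

text \<open>Let \<open>R\<close> be the set of vertices reachable from \<open>B\<^sub>1\<close>. A path from \<open>B\<^sub>1\<close> to another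
  boundary vertex would be a flow with positive flux out of \<open>B\<^sub>1\<close>, so \<open>S(B\<^sub>1) = 0\<close> forces \<open>R\<close> to
  meet the boundary only in \<open>B\<^sub>1\<close>; in particular \<open>R\<close> misses \<open>B\<^sub>2\<close>, and every edge
  carrying \<open>v\<close> starts in \<open>R\<close>. Among the \<open>{0,1}\<close>-flows using only edges with \<open>v = 0\<close> choose one, \<open>F\<close>,
  of maximal flux out of \<open>B\<^sub>2\<close>. Maximality excludes augmenting paths, so the set \<open>X\<close> reachable
  from \<open>B\<^sub>2\<close> in the residual graph contains no other boundary vertex and \<open>F\<close> uses every
  \<open>v\<close>-free edge leaving \<open>X\<close>. Every flow out of \<open>B\<^sub>2\<close> crosses the cut \<open>X - R\<close>, whose capacity is at
  most the number of \<open>v\<close>-free edges leaving \<open>X\<close> because the inner set \<open>X \<inter> R\<close> is superbalanced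
  and \<open>v\<close> is conserved there; hence the flux of \<open>F\<close> is \<open>S(B\<^sub>2)\<close>. Peeling off paths from \<open>B\<^sub>2\<close> to
  the rest of the boundary decomposes \<open>F\<close> into at least \<open>S(B\<^sub>2)\<close> edge-disjoint paths, and adding
  them to \<open>v\<close> keeps reachability, as each new edge is reached along the prefix of its path.\<close>

section \<open>Flux measured by a potential\<close>

definition potential_flux ::
  "'e set \<Rightarrow> ('e \<Rightarrow> 'v) \<Rightarrow> ('e \<Rightarrow> 'v) \<Rightarrow> ('e \<Rightarrow> real) \<Rightarrow> ('v \<Rightarrow> real) \<Rightarrow> real" where
  "potential_flux E s t h \<phi> = (\<Sum>e\<in>E. h e * (\<phi> (s e) - \<phi> (t e)))"

lemma sum_mult_indicator_comp:
  assumes "finite E"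
  shows "(\<Sum>e\<in>E. h e * indicator A (g e)) = (\<Sum>e\<in>{e\<in>E. g e \<in> A}. h e :: real)"
proof -
  have "(\<Sum>e\<in>E. h e * indicator A (g e)) = (\<Sum>e\<in>E. if g e \<in> A then h e else 0)"
    by (intro sum.cong) (auto simp: indicator_def)
  with assms show ?thesis by (simp add: sum.inter_filter)
qed

lemma flux_eq_potential_flux:
  "finite E \<Longrightarrow> flux E s t A h = potential_flux E s t h (indicator A)"
  unfolding flux_def potential_flux_def
  by (simp add: right_diff_distrib sum_subtractf sum_mult_indicator_comp)

lemma conservation_iff_potential_flux:
  "finite E \<Longrightarrow>
     (\<Sum>e\<in>{e\<in>E. t e = x}. h e) = (\<Sum>e\<in>{e\<in>E. s e = x}. h e) \<longleftrightarrow>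
     potential_flux E s t h (indicator {x}) = 0"
  using flux_eq_potential_flux[of E s t "{x}" h] by (auto simp: flux_def)

lemma is_flow_iff_potential_flux:
  "finite E \<Longrightarrow> is_flow V E s t Bd f \<longleftrightarrow>
     (\<forall>e\<in>E. 0 \<le> f e \<and> f e \<le> 1) \<and> (\<forall>x\<in>V - Bd. potential_flux E s t f (indicator {x}) = 0)"
  unfolding is_flow_def by (simp add: conservation_iff_potential_flux)

lemma is_flow_indicator_iff:
  "finite E \<Longrightarrow> is_flow V E s t Bd (indicator F) \<longleftrightarrow>
     (\<forall>x\<in>V - Bd. potential_flux E s t (indicator F) (indicator {x}) = 0)"
  by (simp add: is_flow_iff_potential_flux)

lemma potential_flux_add:
  "potential_flux E s t (\<lambda>e. h e + g e) \<phi> = potential_flux E s t h \<phi> + potential_flux E s t g \<phi>"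
  unfolding potential_flux_def by (simp add: sum.distrib distrib_right)

lemma potential_flux_diff:
  "potential_flux E s t (\<lambda>e. h e - g e) \<phi> = potential_flux E s t h \<phi> - potential_flux E s t g \<phi>"
  unfolding potential_flux_def by (simp add: sum_subtractf left_diff_distrib)

lemma potential_flux_add_potential:
  "potential_flux E s t h (\<lambda>x. \<phi> x + \<psi> x) = potential_flux E s t h \<phi> + potential_flux E s t h \<psi>"
  unfolding potential_flux_def by (simp add: sum.distrib[symmetric] algebra_simps)

lemma potential_flux_indicator_eq_sum:
  "finite Z \<Longrightarrow> potential_flux E s t h (indicator Z) = (\<Sum>z\<in>Z. potential_flux E s t h (indicator {z}))"
proof (induction Z rule: finite_induct)
  case empty
  then show ?case by (simp add: potential_flux_def)
next
  case (insert z Z)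
  have split: "indicator (insert z Z) = (\<lambda>x. indicator {z} x + indicator Z x :: real)"
    using insert.hyps by (auto simp: indicator_def)
  show ?case
    by (subst split) (simp add: potential_flux_add_potential insert)
qed

lemma potential_flux_indicator_enlarge:
  assumes "A \<subseteq> Y" "finite (Y - A)" "\<forall>z\<in>Y - A. potential_flux E s t h (indicator {z}) = 0"
  shows "potential_flux E s t h (indicator Y) = potential_flux E s t h (indicator A)"
proof -
  have split: "indicator Y = (\<lambda>x. indicator A x + indicator (Y - A) x :: real)"
    using assms(1) by (auto simp: indicator_def fun_eq_iff)
  have "potential_flux E s t h (indicator (Y - A)) = 0"
    unfolding potential_flux_indicator_eq_sum[OF assms(2)] using assms(3) by simp
  then show ?thesis
    by (subst split) (simp add: potential_flux_add_potential)
qed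

lemma potential_flux_single_edge:
  assumes "e0 \<in> E" "finite E"
  shows "potential_flux E s t (\<lambda>e. if e = e0 then c else 0) \<phi> = c * (\<phi> (s e0) - \<phi> (t e0))"
proof -
  have "potential_flux E s t (\<lambda>e. if e = e0 then c else 0) \<phi> =
      (\<Sum>e\<in>E. if e = e0 then c * (\<phi> (s e) - \<phi> (t e)) else 0)"
    unfolding potential_flux_def by (intro sum.cong) auto
  then show ?thesis using assms by simp
qed

lemma potential_flux_le_card:
  assumes "\<forall>e\<in>E. 0 \<le> h e \<and> h e \<le> 1" "finite E"
  shows "potential_flux E s t h (indicator Y) \<le> real (card {e\<in>E. s e \<in> Y \<and> t e \<notin> Y})"
proof -
  have "potential_flux E s t h (indicator Y) \<le> (\<Sum>e\<in>E. if s e \<in> Y \<and> t e \<notin> Y then 1 else 0)"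
    unfolding potential_flux_def using assms by (intro sum_mono) (auto simp: indicator_def)
  then show ?thesis using assms(2) by (simp add: sum.inter_filter[symmetric])
qed

section \<open>Walks, paths and reachability\<close>

lemma walk_mono: "walk F s t a p b \<Longrightarrow> F \<subseteq> E \<Longrightarrow> walk E s t a p b"
  by (induction p arbitrary: a) auto

lemma walk_append: "walk E s t a (p @ q) c \<longleftrightarrow> (\<exists>b. walk E s t a p b \<and> walk E s t b q c)"
  by (induction p arbitrary: a) auto

lemma walk_edges_subset: "walk E s t a p b \<Longrightarrow> set p \<subseteq> E"
  by (induction p arbitrary: a) auto

lemma dpath_imp_walk: "dpath E s t a p b \<Longrightarrow> walk E s t a p b"
  by (simp add: dpath_def)

lemma dpath_mono: "dpath F s t a p b \<Longrightarrow> F \<subseteq> E \<Longrightarrow> dpath E s t a p b"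
  by (auto simp: dpath_def intro: walk_mono)

lemma dpath_distinct_edges: "dpath E s t a p b \<Longrightarrow> distinct p"
  unfolding dpath_def by (auto dest: distinct_map[THEN iffD1])

lemma dpath_suffix:
  "dpath E s t a p b \<Longrightarrow> k \<le> length p \<Longrightarrow> dpath E s t ((a # map t p) ! k) (drop k p) b"
proof (induction p arbitrary: a k)
  case Nil
  then show ?case by simp
next
  case (Cons e p)
  then have "dpath E s t (t e) p b" by (auto simp: dpath_def)
  with Cons show ?case by (cases k) auto
qed

lemma dpath_prefix: "dpath E s t a (p @ e # q) b \<Longrightarrow> dpath E s t a p (s e)"
  by (auto simp: dpath_def walk_append)

text \<open>Cutting out the closed subwalks.\<close>
lemma walk_imp_dpath: "walk E s t a p b \<Longrightarrow> \<exists>q. dpath E s t a q b \<and> set q \<subseteq> set p"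
proof (induction p arbitrary: a)
  case Nil
  then show ?case by (auto simp: dpath_def)
next
  case (Cons e p)
  then have e: "e \<in> E" "s e = a" and w: "walk E s t (t e) p b" by auto
  from Cons.IH[OF w] obtain q where q: "dpath E s t (t e) q b" "set q \<subseteq> set p" by blast
  show ?case
  proof (cases "a \<in> set (t e # map t q)")
    case False
    then have "dpath E s t a (e # q) b" using q e by (auto simp: dpath_def)
    then show ?thesis using q(2) by (intro exI[of _ "e # q"]) auto
  next
    case True
    then obtain k where "k < length (t e # map t q)" "(t e # map t q) ! k = a"
      by (metis in_set_conv_nth)
    then have "dpath E s t a (drop k q) b" using dpath_suffix[OF q(1), of k] by simp
    then show ?thesis using q(2) set_drop_subset by fastforce
  qed
qed

definition reach_set :: "'a set \<Rightarrow> ('a \<Rightarrow> 'v) \<Rightarrow> ('a \<Rightarrow> 'v) \<Rightarrow> 'v set \<Rightarrow> 'v set" where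
  "reach_set Ar src tgt A = {y. \<exists>a\<in>A. \<exists>p. walk Ar src tgt a p y}"

lemma subset_reach_set: "A \<subseteq> reach_set Ar src tgt A"
  unfolding reach_set_def by (auto intro!: bexI exI[of _ "[]"])

lemma reach_set_step:
  "x \<in> Ar \<Longrightarrow> src x \<in> reach_set Ar src tgt A \<Longrightarrow> tgt x \<in> reach_set Ar src tgt A"
  unfolding reach_set_def by (auto simp: walk_append intro!: exI[of _ "_ @ [x]"])

lemma reach_set_subset:
  assumes "A \<subseteq> V" "\<forall>x\<in>Ar. tgt x \<in> V"
  shows "reach_set Ar src tgt A \<subseteq> V"
proof -
  have "walk Ar src tgt a p y \<Longrightarrow> a \<in> V \<Longrightarrow> y \<in> V" for a p y
    using assms(2) by (induction p arbitrary: a) auto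
  then show ?thesis using assms(1) unfolding reach_set_def by blast
qed

lemma reach_set_imp_dpath:
  "y \<in> reach_set Ar src tgt A \<Longrightarrow> \<exists>a\<in>A. \<exists>p. dpath Ar src tgt a p y"
  unfolding reach_set_def by (blast dest: walk_imp_dpath)

lemma reachable_from_support:
  "reachable_from V E s t Bd A v \<Longrightarrow> e \<in> E \<Longrightarrow> v e \<noteq> 0 \<Longrightarrow> s e \<in> reach_set E s t A"
  unfolding reachable_from_def reach_set_def dpath_def by blast

lemma potential_flux_path:
  assumes "walk E s t a p b" "distinct p" "finite E"
  shows "potential_flux E s t (indicator (set p)) \<phi> = \<phi> a - \<phi> b"
  using assms(1,2)
proof (induction p arbitrary: a)
  case Nil
  then show ?case by (simp add: potential_flux_def)
next
  case (Cons e p)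
  have split: "indicator (set (e # p)) = (\<lambda>x. indicator (set p) x + (if x = e then 1 else 0 :: real))"
    using Cons.prems(2) by (auto simp: indicator_def)
  show ?case
    using Cons.IH[of "t e"] Cons.prems assms(3)
    by (subst split) (simp add: potential_flux_add potential_flux_single_edge)
qed

lemma potential_flux_dpath:
  "finite E \<Longrightarrow> dpath E s t a p b \<Longrightarrow> potential_flux E s t (indicator (set p)) \<phi> = \<phi> a - \<phi> b"
  by (simp add: potential_flux_path dpath_imp_walk dpath_distinct_edges)

lemma is_flow_path:
  assumes "finite E" "dpath E s t a p b" "a \<in> Bd" "b \<in> Bd"
  shows "is_flow V E s t Bd (indicator (set p))"
  using assms by (auto simp: is_flow_indicator_iff potential_flux_dpath split: split_indicator)

lemma flux_path:
  "finite E \<Longrightarrow> dpath E s t a p b \<Longrightarrow> flux E s t A (indicator (set p)) = indicator A a - indicator A b"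
  by (simp add: flux_eq_potential_flux potential_flux_dpath)

lemma flux_le_maxflux:
  assumes "finite E" "is_flow V E s t Bd f"
  shows "flux E s t A f \<le> maxflux V E s t Bd A"
  unfolding maxflux_def
proof (rule cSup_upper)
  show "flux E s t A f \<in> {flux E s t A f |f. is_flow V E s t Bd f}" using assms(2) by blast
  have "flux E s t A g \<le> real (card E)" if "is_flow V E s t Bd g" for g
  proof -
    have "flux E s t A g \<le> real (card {e\<in>E. s e \<in> A \<and> t e \<notin> A})"
      using that assms(1) by (simp add: flux_eq_potential_flux potential_flux_le_card is_flow_def)
    also have "\<dots> \<le> real (card E)" using assms(1) by (simp add: card_mono)
    finally show ?thesis .
  qed
  then show "bdd_above {flux E s t A f |f. is_flow V E s t Bd f}"
    by (auto simp: bdd_above_def)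
qed

lemma maxflux_least:
  assumes "\<And>f. is_flow V E s t Bd f \<Longrightarrow> flux E s t A f \<le> c"
  shows "maxflux V E s t Bd A \<le> c"
  unfolding maxflux_def
proof (rule cSup_least)
  have "is_flow V E s t Bd (\<lambda>_. 0)" by (simp add: is_flow_def)
  then show "{flux E s t A f |f. is_flow V E s t Bd f} \<noteq> {}" by blast
qed (use assms in blast)

lemma reach_set_boundary_subset:
  assumes "network V E s t Bd" "maxflux V E s t Bd A \<le> 0" "A \<subseteq> Bd"
  shows "reach_set E s t A \<inter> Bd \<subseteq> A"
proof
  fix b assume b: "b \<in> reach_set E s t A \<inter> Bd"
  then obtain a p where a: "a \<in> A" "dpath E s t a p b" by (blast dest: reach_set_imp_dpath)
  have fE: "finite E" using assms(1) by (simp add: network_def)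
  have "is_flow V E s t Bd (indicator (set p))"
    using is_flow_path[OF fE a(2)] a(1) b assms(3) by blast
  then have "flux E s t A (indicator (set p)) \<le> 0"
    using flux_le_maxflux[OF fE] assms(2) by (meson order_trans)
  then show "b \<in> A" using flux_path[OF fE a(2), of A] a(1) by (auto split: split_indicator_asm)
qed

section \<open>Edge-disjoint path families\<close>

lemma exists_path_of_positive_flux:
  assumes net: "network V E s t Bd" and "F \<subseteq> E" "A \<subseteq> Bd"
    and flow: "is_flow V E s t Bd (indicator F)" and pos: "flux E s t A (indicator F) > 0"
  shows "\<exists>a\<in>A. \<exists>b\<in>Bd - A. \<exists>p. dpath E s t a p b \<and> set p \<subseteq> F"
proof (rule ccontr)
  assume no_path: "\<not> ?thesis"
  have fE: "finite E" and fV: "finite V" and "Bd \<subseteq> V" and eV: "\<forall>e\<in>E. s e \<in> V \<and> t e \<in> V"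
    using net by (auto simp: network_def)
  define Q where "Q = reach_set F s t A"
  have QV: "Q \<subseteq> V"
    unfolding Q_def using \<open>F \<subseteq> E\<close> \<open>A \<subseteq> Bd\<close> \<open>Bd \<subseteq> V\<close> eV by (intro reach_set_subset) auto
  have "Q \<inter> (Bd - A) = {}"
  proof (rule ccontr)
    assume "Q \<inter> (Bd - A) \<noteq> {}"
    then obtain a p b where "a \<in> A" "b \<in> Bd - A" "dpath F s t a p b"
      unfolding Q_def by (blast dest: reach_set_imp_dpath)
    then show False
      using no_path \<open>F \<subseteq> E\<close> by (meson dpath_imp_walk dpath_mono walk_edges_subset)
  qed
  then have "potential_flux E s t (indicator F) (indicator Q) = potential_flux E s t (indicator F) (indicator A)"
    using QV fV flow fE unfolding Q_def
    by (intro potential_flux_indicator_enlarge)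
      (auto simp: subset_reach_set is_flow_indicator_iff intro: finite_subset)
  also have "\<dots> > 0" using pos fE by (simp add: flux_eq_potential_flux)
  finally have "potential_flux E s t (indicator F) (indicator Q) > 0" .
  moreover have "potential_flux E s t (indicator F) (indicator Q) \<le> 0"
    unfolding potential_flux_def Q_def
    by (intro sum_nonpos) (auto simp: reach_set_step split: split_indicator)
  ultimately show False by simp
qed

lemma disjoint_family_on_nth_Cons:
  "disjoint_family_on (\<lambda>i. set ((p # ps) ! i)) {..<length (p # ps)} \<longleftrightarrow>
     (\<forall>q\<in>set ps. set p \<inter> set q = {}) \<and> disjoint_family_on (\<lambda>i. set (ps ! i)) {..<length ps}"
    (is "?D \<longleftrightarrow> ?head \<and> ?tail")
proof
  assume D: ?D
  have "set p \<inter> set (ps ! j) = {}" if "j < length ps" for j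
    using D[unfolded disjoint_family_on_def, rule_format, of 0 "Suc j"] that by simp
  then have ?head by (metis in_set_conv_nth)
  moreover have ?tail
    unfolding disjoint_family_on_def
    using D[unfolded disjoint_family_on_def, rule_format, of "Suc _" "Suc _"] by simp
  ultimately show "?head \<and> ?tail" ..
next
  assume R: "?head \<and> ?tail"
  show ?D
    unfolding disjoint_family_on_def
  proof (intro ballI impI)
    fix m n assume "m \<in> {..<length (p # ps)}" "n \<in> {..<length (p # ps)}" "m \<noteq> n"
    with R show "set ((p # ps) ! m) \<inter> set ((p # ps) ! n) = {}"
      by (cases m; cases n) (auto simp: disjoint_family_on_def dest!: nth_mem)
  qed
qed

definition path_multiplicity :: "'e list list \<Rightarrow> 'e \<Rightarrow> real" where
  "path_multiplicity ps e = real (card {i. i < length ps \<and> e \<in> set (ps ! i)})"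

lemma path_multiplicity_Nil [simp]: "path_multiplicity [] e = 0"
  by (simp add: path_multiplicity_def)

lemma path_multiplicity_Cons:
  "path_multiplicity (p # ps) e = indicator (set p) e + path_multiplicity ps e"
proof -
  have "{i. i < length (p # ps) \<and> e \<in> set ((p # ps) ! i)} =
      (if e \<in> set p then {0} else {}) \<union> Suc ` {i. i < length ps \<and> e \<in> set (ps ! i)}"
    by (auto simp: image_iff less_Suc_eq_0_disj)
  moreover have "card ((if e \<in> set p then {0} else {}) \<union> Suc ` {i. i < length ps \<and> e \<in> set (ps ! i)}) =
      (if e \<in> set p then 1 else 0) + card {i. i < length ps \<and> e \<in> set (ps ! i)}"
    by (subst card_Un_disjoint) (auto simp: card_image)
  ultimately show ?thesis by (simp add: path_multiplicity_def indicator_def)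
qed

lemma path_multiplicity_disjoint:
  "disjoint_family_on (\<lambda>i. set (ps ! i)) {..<length ps} \<Longrightarrow>
     path_multiplicity ps = indicator (\<Union>p\<in>set ps. set p)"
proof (induction ps)
  case Nil
  then show ?case by (simp add: fun_eq_iff)
next
  case (Cons p ps)
  then have "set p \<inter> (\<Union>q\<in>set ps. set q) = {}" and "path_multiplicity ps = indicator (\<Union>q\<in>set ps. set q)"
    unfolding disjoint_family_on_nth_Cons by auto
  then show ?case by (auto simp: fun_eq_iff path_multiplicity_Cons indicator_def)
qed

lemma potential_flux_path_multiplicity:
  assumes "finite E" "\<forall>p\<in>set ps. \<exists>a\<in>A. \<exists>b\<in>Bd - A. dpath E s t a p b"
    and "\<forall>a\<in>A. \<phi> a = c" "\<forall>b\<in>Bd - A. \<phi> b = 0"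
  shows "potential_flux E s t (path_multiplicity ps) \<phi> = c * length ps"
  using assms(2)
proof (induction ps)
  case Nil
  then show ?case by (simp add: potential_flux_def)
next
  case (Cons p ps)
  then obtain a b where "a \<in> A" "b \<in> Bd - A" "dpath E s t a p b" by auto
  with Cons assms show ?case
    by (simp add: path_multiplicity_Cons potential_flux_add potential_flux_dpath algebra_simps)
qed

lemma path_multiplicity_flow:
  assumes net: "network V E s t Bd" and "A \<subseteq> Bd"
    and paths: "\<forall>p\<in>set ps. \<exists>a\<in>A. \<exists>b\<in>Bd - A. dpath E s t a p b"
    and disj: "disjoint_family_on (\<lambda>i. set (ps ! i)) {..<length ps}"
  shows "is_flow V E s t Bd (path_multiplicity ps)"
    and "flux E s t A (path_multiplicity ps) = length ps"
proof -
  have fE: "finite E" using net by (simp add: network_def)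
  have "potential_flux E s t (path_multiplicity ps) (indicator {x}) = 0" if "x \<notin> Bd" for x
    using that \<open>A \<subseteq> Bd\<close>
    by (subst potential_flux_path_multiplicity[OF fE paths, of _ 0]) (auto split: split_indicator)
  then show "is_flow V E s t Bd (path_multiplicity ps)"
    using fE by (simp add: is_flow_iff_potential_flux path_multiplicity_disjoint[OF disj])
  show "flux E s t A (path_multiplicity ps) = length ps"
    using potential_flux_path_multiplicity[OF fE paths, of "indicator A" 1] fE
    by (simp add: flux_eq_potential_flux)
qed

lemma path_decomposition:
  assumes net: "network V E s t Bd" and "A \<subseteq> Bd" and "F \<subseteq> E"
    and "is_flow V E s t Bd (indicator F)"
  shows "\<exists>ps. (\<forall>q\<in>set ps. \<exists>a\<in>A. \<exists>b\<in>Bd - A. dpath E s t a q b) \<and> (\<forall>q\<in>set ps. set q \<subseteq> F) \<and>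
    disjoint_family_on (\<lambda>i. set (ps ! i)) {..<length ps} \<and> flux E s t A (indicator F) \<le> length ps"
proof -
  have fE: "finite E" using net by (simp add: network_def)
  then have "finite F" using \<open>F \<subseteq> E\<close> by (simp add: finite_subset)
  then show ?thesis using \<open>F \<subseteq> E\<close> \<open>is_flow V E s t Bd (indicator F)\<close>
  proof (induction F rule: finite_psubset_induct)
    case (psubset F)
    show ?case
    proof (cases "flux E s t A (indicator F) > 0")
      case False
      then show ?thesis by (intro exI[of _ "[]"]) (simp add: disjoint_family_on_def)
    next
      case True
      then obtain a b p where ab: "a \<in> A" "b \<in> Bd - A" and p: "dpath E s t a p b" "set p \<subseteq> F"
        using exists_path_of_positive_flux[OF net psubset.prems(1) \<open>A \<subseteq> Bd\<close> psubset.prems(2)] by blast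
      have "p \<noteq> []" using p(1) ab by (auto simp: dpath_def)
      then have smaller: "F - set p \<subset> F" using p(2) by (cases p) auto
      have split: "indicator (F - set p) = (\<lambda>e. indicator F e - indicator (set p) e :: real)"
        using p(2) by (auto simp: indicator_def fun_eq_iff)
      have "indicator {x} a = (0::real)" "indicator {x} b = (0::real)" if "x \<notin> Bd" for x
        using that ab \<open>A \<subseteq> Bd\<close> by (auto simp: indicator_def)
      then have "is_flow V E s t Bd (indicator (F - set p))"
        using psubset.prems(2)
        unfolding is_flow_indicator_iff[OF fE] unfolding split potential_flux_diff potential_flux_dpath[OF fE p(1)]
        by simp
      then obtain ps where ps: "\<forall>q\<in>set ps. \<exists>a\<in>A. \<exists>b\<in>Bd - A. dpath E s t a q b"
          "\<forall>q\<in>set ps. set q \<subseteq> F - set p" "disjoint_family_on (\<lambda>i. set (ps ! i)) {..<length ps}"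
          "flux E s t A (indicator (F - set p)) \<le> length ps"
        using psubset.IH[OF smaller] psubset.prems(1) by blast
      have "flux E s t A (indicator (F - set p)) = flux E s t A (indicator F) - 1"
        using ab fE by (simp add: split flux_eq_potential_flux potential_flux_diff potential_flux_dpath[OF fE p(1)])
      moreover have "disjoint_family_on (\<lambda>i. set ((p # ps) ! i)) {..<length (p # ps)}"
        unfolding disjoint_family_on_nth_Cons using ps(2,3) by blast
      ultimately show ?thesis
        using ps ab p by (intro exI[of _ "p # ps"]) auto
    qed
  qed
qed

section \<open>Augmenting paths and cuts\<close>

definition max_indicator_flow ::
  "'v set \<Rightarrow> 'e set \<Rightarrow> ('e \<Rightarrow> 'v) \<Rightarrow> ('e \<Rightarrow> 'v) \<Rightarrow> 'v set \<Rightarrow> 'e set \<Rightarrow> 'v set \<Rightarrow> 'e set \<Rightarrow> bool" where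
  "max_indicator_flow V E s t Bd E' A F \<longleftrightarrow> F \<subseteq> E' \<and> is_flow V E s t Bd (indicator F) \<and>
     (\<forall>G\<subseteq>E'. is_flow V E s t Bd (indicator G) \<longrightarrow> flux E s t A (indicator G) \<le> flux E s t A (indicator F))"

lemma exists_max_indicator_flow:
  assumes "finite E'"
  obtains F where "max_indicator_flow V E s t Bd E' A F"
proof -
  define C where "C = {G. G \<subseteq> E' \<and> is_flow V E s t Bd (indicator G)}"
  have "finite C" unfolding C_def using assms by (auto intro: finite_subset[of _ "Pow E'"])
  moreover have "{} \<in> C" unfolding C_def by (simp add: is_flow_def)
  ultimately have "Max ((\<lambda>G. flux E s t A (indicator G)) ` C) \<in> (\<lambda>G. flux E s t A (indicator G)) ` C"
    by (intro Max_in) auto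
  then obtain F where "F \<in> C" "flux E s t A (indicator F) = Max ((\<lambda>G. flux E s t A (indicator G)) ` C)"
    by auto
  with \<open>finite C\<close> have "max_indicator_flow V E s t Bd E' A F"
    unfolding max_indicator_flow_def C_def by auto
  then show thesis by (rule that)
qed

text \<open>The residual graph of \<open>F \<subseteq> E'\<close>: the arc \<open>(e, True)\<close> runs along an edge \<open>e \<in> E' - F\<close>,
  the arc \<open>(e, False)\<close> runs backwards along an edge \<open>e \<in> F\<close>.\<close>

definition residual_arcs :: "'e set \<Rightarrow> 'e set \<Rightarrow> ('e \<times> bool) set" where
  "residual_arcs E' F = (\<lambda>e. (e, True)) ` (E' - F) \<union> (\<lambda>e. (e, False)) ` F"

definition arc_src :: "('e \<Rightarrow> 'v) \<Rightarrow> ('e \<Rightarrow> 'v) \<Rightarrow> 'e \<times> bool \<Rightarrow> 'v" where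
  "arc_src s t x = (if snd x then s (fst x) else t (fst x))"

definition arc_tgt :: "('e \<Rightarrow> 'v) \<Rightarrow> ('e \<Rightarrow> 'v) \<Rightarrow> 'e \<times> bool \<Rightarrow> 'v" where
  "arc_tgt s t x = (if snd x then t (fst x) else s (fst x))"

lemma potential_flux_arc_walk:
  assumes "walk Ar (arc_src s t) (arc_tgt s t) a q b" "distinct q" "fst ` Ar \<subseteq> E" "finite E"
  shows "potential_flux E s t (\<lambda>e. of_bool ((e, True) \<in> set q) - of_bool ((e, False) \<in> set q)) \<phi> =
    \<phi> a - \<phi> b"
  using assms(1,2)
proof (induction q arbitrary: a)
  case Nil
  then show ?case by (simp add: potential_flux_def)
next
  case (Cons x q)
  obtain e fwd where x: "x = (e, fwd)" by (cases x)
  have "e \<in> E" using Cons.prems assms(3) x by force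
  have split: "(\<lambda>e. of_bool ((e, True) \<in> set (x # q)) - of_bool ((e, False) \<in> set (x # q))) =
      (\<lambda>e'. (of_bool ((e', True) \<in> set q) - of_bool ((e', False) \<in> set q)) +
        (if e' = e then (if fwd then 1 else -1) else 0 :: real))"
    using Cons.prems(2) x by (auto simp: fun_eq_iff)
  show ?case
    using Cons.IH[of "arc_tgt s t x"] Cons.prems \<open>e \<in> E\<close> assms(4)
    by (subst split) (cases fwd; simp add: x potential_flux_add potential_flux_single_edge arc_src_def arc_tgt_def)
qed

lemma augment_along_residual_walk:
  assumes "walk (residual_arcs E' F) (arc_src s t) (arc_tgt s t) a q b" "distinct q"
    and "F \<subseteq> E'" "E' \<subseteq> E" "finite E"
  obtains F' where "F' \<subseteq> E'"
    "\<And>\<phi>. potential_flux E s t (indicator F') \<phi> = potential_flux E s t (indicator F) \<phi> + \<phi> a - \<phi> b"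
proof
  have arcs: "set q \<subseteq> residual_arcs E' F" using assms(1) by (rule walk_edges_subset)
  define F' where "F' = (F - {e. (e, False) \<in> set q}) \<union> {e. (e, True) \<in> set q}"
  show "F' \<subseteq> E'" using arcs assms(3) unfolding F'_def residual_arcs_def by auto
  have "indicator F' = (\<lambda>e. indicator F e + (of_bool ((e, True) \<in> set q) - of_bool ((e, False) \<in> set q)) :: real)"
    using arcs unfolding F'_def residual_arcs_def by (fastforce simp: fun_eq_iff indicator_def)
  moreover have "fst ` residual_arcs E' F \<subseteq> E" using assms(3,4) by (auto simp: residual_arcs_def)
  ultimately show "potential_flux E s t (indicator F') \<phi> = potential_flux E s t (indicator F) \<phi> + \<phi> a - \<phi> b" for \<phi>
    using potential_flux_arc_walk[OF assms(1,2) _ assms(5)] by (simp add: potential_flux_add)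
qed

lemma max_indicator_flow_no_augmenting_path:
  assumes net: "network V E s t Bd" and "B \<subseteq> Bd" "E' \<subseteq> E"
    and max: "max_indicator_flow V E s t Bd E' B F"
  shows "reach_set (residual_arcs E' F) (arc_src s t) (arc_tgt s t) B \<inter> (Bd - B) = {}"
proof (rule ccontr)
  assume "reach_set (residual_arcs E' F) (arc_src s t) (arc_tgt s t) B \<inter> (Bd - B) \<noteq> {}"
  then obtain a q b where ab: "a \<in> B" "b \<in> Bd - B"
    and q: "dpath (residual_arcs E' F) (arc_src s t) (arc_tgt s t) a q b"
    by (blast dest: reach_set_imp_dpath)
  have fE: "finite E" using net by (simp add: network_def)
  have F: "F \<subseteq> E'" "is_flow V E s t Bd (indicator F)" using max by (auto simp: max_indicator_flow_def)
  obtain F' where "F' \<subseteq> E'" and F': "\<And>\<phi>. potential_flux E s t (indicator F') \<phi> =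
      potential_flux E s t (indicator F) \<phi> + \<phi> a - \<phi> b"
    using augment_along_residual_walk[OF dpath_imp_walk[OF q] dpath_distinct_edges[OF q] F(1) \<open>E' \<subseteq> E\<close> fE]
    by blast
  have "indicator {x} a = (0::real)" "indicator {x} b = (0::real)" if "x \<notin> Bd" for x
    using that ab \<open>B \<subseteq> Bd\<close> by (auto simp: indicator_def)
  then have "is_flow V E s t Bd (indicator F')"
    using F(2) unfolding is_flow_indicator_iff[OF fE] F' by simp
  with max \<open>F' \<subseteq> E'\<close> have "flux E s t B (indicator F') \<le> flux E s t B (indicator F)"
    unfolding max_indicator_flow_def by blast
  moreover have "flux E s t B (indicator F') = flux E s t B (indicator F) + 1"
    using ab fE by (simp add: flux_eq_potential_flux F')
  ultimately show False by simp
qed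

lemma flux_le_cut:
  assumes "finite E" "is_flow V E s t Bd f" "A \<subseteq> Y" "Y - A \<subseteq> V - Bd" "finite (Y - A)"
  shows "flux E s t A f \<le> card {e\<in>E. s e \<in> Y \<and> t e \<notin> Y}"
proof -
  have "\<forall>x\<in>V - Bd. potential_flux E s t f (indicator {x}) = 0"
    using assms(1,2) by (simp add: is_flow_iff_potential_flux)
  then have "flux E s t A f = potential_flux E s t f (indicator Y)"
    using assms(1,3-5) potential_flux_indicator_enlarge[of A Y E s t f]
    by (simp add: flux_eq_potential_flux subset_iff)
  also have "\<dots> \<le> card {e\<in>E. s e \<in> Y \<and> t e \<notin> Y}"
    using assms(1,2) by (intro potential_flux_le_card) (auto simp: is_flow_def)
  finally show ?thesis .
qed

lemma potential_flux_residually_closed: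
  assumes "finite E" "F \<subseteq> E'" "E' \<subseteq> E"
    and closed: "\<forall>x\<in>residual_arcs E' F. arc_src s t x \<in> X \<longrightarrow> arc_tgt s t x \<in> X"
  shows "potential_flux E s t (indicator F) (indicator X) = card {e\<in>E'. s e \<in> X \<and> t e \<notin> X}"
proof -
  have "potential_flux E s t (indicator F) (indicator X) =
      (\<Sum>e\<in>E. if e \<in> E' \<and> s e \<in> X \<and> t e \<notin> X then 1 else 0)"
    unfolding potential_flux_def
  proof (intro sum.cong refl)
    fix e assume "e \<in> E"
    have "e \<in> F \<Longrightarrow> t e \<in> X \<Longrightarrow> s e \<in> X" "e \<in> E' - F \<Longrightarrow> s e \<in> X \<Longrightarrow> t e \<in> X"
      using closed[rule_format, of "(e, False)"] closed[rule_format, of "(e, True)"]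
      by (auto simp: residual_arcs_def arc_src_def arc_tgt_def)
    then show "indicator F e * (indicator X (s e) - indicator X (t e)) =
        (if e \<in> E' \<and> s e \<in> X \<and> t e \<notin> X then 1 else 0 :: real)"
      using \<open>F \<subseteq> E'\<close> by (auto simp: indicator_def)
  qed
  also have "\<dots> = card {e\<in>E. e \<in> E' \<and> s e \<in> X \<and> t e \<notin> X}"
    using assms(1) by (simp add: sum.inter_filter[symmetric])
  also have "{e\<in>E. e \<in> E' \<and> s e \<in> X \<and> t e \<notin> X} = {e\<in>E'. s e \<in> X \<and> t e \<notin> X}"
    using assms(3) by auto
  finally show ?thesis .
qed

lemma potential_flux_one_nonneg:
  assumes "inner_superbalanced V E s t Bd" "finite E" "finite Z" "Z \<subseteq> V - Bd"
  shows "potential_flux E s t (\<lambda>_. 1) (indicator Z) \<ge> 0"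
proof -
  have "potential_flux E s t (\<lambda>_. 1) (indicator {z}) \<ge> 0" if "z \<in> Z" for z
  proof -
    have "card {e\<in>E. t e = z} \<le> card {e\<in>E. s e = z}"
      using that assms(1,4) unfolding inner_superbalanced_def by auto
    then show ?thesis using flux_eq_potential_flux[OF assms(2), of s t "{z}" "\<lambda>_. 1"]
      by (simp add: flux_def)
  qed
  then show ?thesis
    unfolding potential_flux_indicator_eq_sum[OF assms(3)] by (rule sum_nonneg)
qed

text \<open>Superbalance is what allows moving the cut: the unused edges entering the inner set \<open>X \<inter> R\<close>
  are paid for by the unused edges leaving it.\<close>
lemma cut_outside_support_le:
  assumes sb: "inner_superbalanced V E s t Bd" and net: "network V E s t Bd"
    and v: "is_flow V E s t Bd v" "zero_one E v"
    and closed: "\<forall>e\<in>E. s e \<in> R \<longrightarrow> t e \<in> R" and supp: "\<forall>e\<in>E. v e \<noteq> 0 \<longrightarrow> s e \<in> R"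
    and inner: "X \<inter> R \<subseteq> V - Bd"
  shows "card {e\<in>E. s e \<in> X - R \<and> t e \<notin> X - R} \<le> card {e\<in>E. v e = 0 \<and> s e \<in> X \<and> t e \<notin> X}"
proof -
  have fE: "finite E" and fV: "finite V" using net by (auto simp: network_def)
  define Z where "Z = X \<inter> R"
  have fZ: "finite Z" using inner fV unfolding Z_def by (auto intro: finite_subset)
  have "potential_flux E s t v (indicator Z) = 0"
    unfolding potential_flux_indicator_eq_sum[OF fZ]
    using v(1) inner fE by (intro sum.neutral) (auto simp: Z_def is_flow_iff_potential_flux)
  then have excess: "potential_flux E s t (\<lambda>e. 1 - v e) (indicator Z) \<ge> 0"
    using potential_flux_one_nonneg[OF sb fE fZ] inner unfolding Z_def
    by (simp add: potential_flux_diff)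
  have "(\<Sum>e\<in>E. if s e \<in> X - R \<and> t e \<notin> X - R then 1 else 0) + potential_flux E s t (\<lambda>e. 1 - v e) (indicator Z)
      \<le> (\<Sum>e\<in>E. if v e = 0 \<and> s e \<in> X \<and> t e \<notin> X then 1 else 0 :: real)"
    unfolding potential_flux_def sum.distrib[symmetric]
  proof (rule sum_mono)
    fix e assume "e \<in> E"
    then have "v e = 0 \<or> v e = 1" "s e \<in> R \<Longrightarrow> t e \<in> R" "v e \<noteq> 0 \<Longrightarrow> s e \<in> R"
      using v(2) closed supp by (auto simp: zero_one_def)
    then show "(if s e \<in> X - R \<and> t e \<notin> X - R then 1 else 0) + (1 - v e) * (indicator Z (s e) - indicator Z (t e))
        \<le> (if v e = 0 \<and> s e \<in> X \<and> t e \<notin> X then 1 else 0 :: real)"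
      unfolding Z_def by (auto simp: indicator_def)
  qed
  with excess fE show ?thesis by (simp add: sum.inter_filter[symmetric])
qed

lemma max_indicator_flow_saturates_cut:
  assumes net: "network V E s t Bd" and "B \<subseteq> Bd" "E' \<subseteq> E"
    and max: "max_indicator_flow V E s t Bd E' B F"
  obtains X where "B \<subseteq> X" "X \<subseteq> V" "X \<inter> (Bd - B) = {}"
    "flux E s t B (indicator F) = card {e\<in>E'. s e \<in> X \<and> t e \<notin> X}"
proof
  have fE: "finite E" and fV: "finite V" and "Bd \<subseteq> V" and eV: "\<forall>e\<in>E. s e \<in> V \<and> t e \<in> V"
    using net by (auto simp: network_def)
  have F: "F \<subseteq> E'" "is_flow V E s t Bd (indicator F)" using max by (auto simp: max_indicator_flow_def)
  define X where "X = reach_set (residual_arcs E' F) (arc_src s t) (arc_tgt s t) B"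
  show "B \<subseteq> X" unfolding X_def by (rule subset_reach_set)
  show "X \<inter> (Bd - B) = {}"
    unfolding X_def by (rule max_indicator_flow_no_augmenting_path[OF net \<open>B \<subseteq> Bd\<close> \<open>E' \<subseteq> E\<close> max])
  show "X \<subseteq> V"
    unfolding X_def using \<open>B \<subseteq> Bd\<close> \<open>Bd \<subseteq> V\<close> F(1) \<open>E' \<subseteq> E\<close> eV
    by (intro reach_set_subset) (auto simp: residual_arcs_def arc_tgt_def)
  with \<open>X \<inter> (Bd - B) = {}\<close> have inner: "X - B \<subseteq> V - Bd" "finite (X - B)"
    using fV by (auto intro: finite_subset)
  have "\<forall>x\<in>residual_arcs E' F. arc_src s t x \<in> X \<longrightarrow> arc_tgt s t x \<in> X"
    unfolding X_def by (blast intro: reach_set_step)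
  then have "potential_flux E s t (indicator F) (indicator X) = card {e\<in>E'. s e \<in> X \<and> t e \<notin> X}"
    using potential_flux_residually_closed[OF fE F(1) \<open>E' \<subseteq> E\<close>] by blast
  moreover have "\<forall>z\<in>X - B. potential_flux E s t (indicator F) (indicator {z}) = 0"
    using inner(1) F(2) fE by (auto simp: is_flow_indicator_iff)
  then have "potential_flux E s t (indicator F) (indicator X) = flux E s t B (indicator F)"
    using potential_flux_indicator_enlarge[OF \<open>B \<subseteq> X\<close> inner(2)] fE
    by (simp add: flux_eq_potential_flux)
  ultimately show "flux E s t B (indicator F) = card {e\<in>E'. s e \<in> X \<and> t e \<notin> X}" by simp
qed

lemma maxflux_eq_max_indicator_flow:
  assumes net: "network V E s t Bd" and sb: "inner_superbalanced V E s t Bd"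
    and v: "is_flow V E s t Bd v" "zero_one E v"
    and closed: "\<forall>e\<in>E. s e \<in> R \<longrightarrow> t e \<in> R" and supp: "\<forall>e\<in>E. v e \<noteq> 0 \<longrightarrow> s e \<in> R"
    and "R \<inter> B = {}" "B \<subseteq> Bd"
    and max: "max_indicator_flow V E s t Bd {e\<in>E. v e = 0} B F"
  shows "maxflux V E s t Bd B = flux E s t B (indicator F)"
proof -
  have fE: "finite E" and fV: "finite V" using net by (auto simp: network_def)
  obtain X where X: "B \<subseteq> X" "X \<subseteq> V" "X \<inter> (Bd - B) = {}"
    and val: "flux E s t B (indicator F) = card {e\<in>{e\<in>E. v e = 0}. s e \<in> X \<and> t e \<notin> X}"
    using max_indicator_flow_saturates_cut[OF net \<open>B \<subseteq> Bd\<close> _ max] by blast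
  have "flux E s t B f \<le> flux E s t B (indicator F)" if f: "is_flow V E s t Bd f" for f
  proof -
    have "flux E s t B f \<le> card {e\<in>E. s e \<in> X - R \<and> t e \<notin> X - R}"
    proof (rule flux_le_cut[OF fE f])
      show "B \<subseteq> X - R" "X - R - B \<subseteq> V - Bd"
        using X \<open>R \<inter> B = {}\<close> by auto
      show "finite (X - R - B)" using fV X(2) by (meson Diff_subset finite_subset)
    qed
    also have "\<dots> \<le> card {e\<in>E. v e = 0 \<and> s e \<in> X \<and> t e \<notin> X}"
    proof -
      have "X \<inter> R \<subseteq> V - Bd" using X \<open>R \<inter> B = {}\<close> by auto
      then show ?thesis using cut_outside_support_le[OF sb net v closed supp] by simp
    qed
    finally show ?thesis using val by (simp add: conj_assoc)
  qed
  then show ?thesis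
    using flux_le_maxflux[OF fE] max
    by (intro antisym maxflux_least) (auto simp: max_indicator_flow_def)
qed

lemma disjoint_paths_attaining_maxflux:
  assumes net: "network V E s t Bd" and sb: "inner_superbalanced V E s t Bd"
    and reach: "reachable_from V E s t Bd A v" and "maxflux V E s t Bd A \<le> 0"
    and "A \<subseteq> Bd" "B \<subseteq> Bd" "A \<inter> B = {}"
  obtains ps where "real (length ps) = maxflux V E s t Bd B"
    "\<forall>p\<in>set ps. \<exists>a\<in>B. \<exists>b\<in>Bd - B. dpath E s t a p b"
    "disjoint_family_on (\<lambda>i. set (ps ! i)) {..<length ps}"
    "\<forall>p\<in>set ps. \<forall>e\<in>set p. v e = 0"
proof -
  have fE: "finite E" using net by (simp add: network_def)
  have v: "is_flow V E s t Bd v" "zero_one E v" using reach by (auto simp: reachable_from_def)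
  define R where "R = reach_set E s t A"
  have "R \<inter> B = {}"
    using reach_set_boundary_subset[OF net] assms(4-7) unfolding R_def by blast
  moreover have "\<forall>e\<in>E. s e \<in> R \<longrightarrow> t e \<in> R" unfolding R_def by (blast intro: reach_set_step)
  moreover have "\<forall>e\<in>E. v e \<noteq> 0 \<longrightarrow> s e \<in> R" unfolding R_def using reach by (blast intro: reachable_from_support)
  moreover have "finite {e\<in>E. v e = 0}" using fE by simp
  then obtain F where F: "max_indicator_flow V E s t Bd {e\<in>E. v e = 0} B F"
    by (rule exists_max_indicator_flow)
  ultimately have max: "maxflux V E s t Bd B = flux E s t B (indicator F)"
    using maxflux_eq_max_indicator_flow[OF net sb v _ _ _ \<open>B \<subseteq> Bd\<close>] by blast
  have unused: "F \<subseteq> {e\<in>E. v e = 0}" and "is_flow V E s t Bd (indicator F)"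
    using F by (auto simp: max_indicator_flow_def)
  then have "F \<subseteq> E" by blast
  obtain ps where paths: "\<forall>p\<in>set ps. \<exists>a\<in>B. \<exists>b\<in>Bd - B. dpath E s t a p b"
    and in_F: "\<forall>p\<in>set ps. set p \<subseteq> F"
    and disj: "disjoint_family_on (\<lambda>i. set (ps ! i)) {..<length ps}"
    and "flux E s t B (indicator F) \<le> length ps"
    using path_decomposition[OF net \<open>B \<subseteq> Bd\<close> \<open>F \<subseteq> E\<close> \<open>is_flow V E s t Bd (indicator F)\<close>] by blast
  note mult = path_multiplicity_flow[OF net \<open>B \<subseteq> Bd\<close> paths disj]
  have "real (length ps) \<le> maxflux V E s t Bd B"
    using flux_le_maxflux[OF fE mult(1), of B] mult(2) by simp
  with max \<open>flux E s t B (indicator F) \<le> length ps\<close> have "real (length ps) = maxflux V E s t Bd B"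
    by simp
  moreover have "\<forall>p\<in>set ps. \<forall>e\<in>set p. v e = 0" using in_F unused by blast
  ultimately show thesis using that paths disj by blast
qed

section \<open>Extending a reachable flow\<close>

lemma reachable_from_extension:
  assumes reach: "reachable_from V E s t Bd A v"
    and w: "is_flow V E s t Bd w" "zero_one E w" "\<forall>e\<in>E. v e \<le> w e"
    and new: "\<forall>e\<in>E. w e \<noteq> 0 \<and> v e = 0 \<longrightarrow> (\<exists>a\<in>B. \<exists>es. dpath E s t a es (s e) \<and> (\<forall>d\<in>set es. w d = 1))"
  shows "reachable_from V E s t Bd (A \<union> B) w"
  unfolding reachable_from_def
proof (intro conjI ballI impI w(1,2))
  fix e assume "e \<in> E" "w e \<noteq> 0"
  show "\<exists>a\<in>A \<union> B. \<exists>es. dpath E s t a es (s e) \<and> (\<forall>d\<in>set es. w d = 1)"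
  proof (cases "v e = 0")
    case True
    then show ?thesis using new \<open>e \<in> E\<close> \<open>w e \<noteq> 0\<close> by blast
  next
    case False
    then obtain a es where a: "a \<in> A" "dpath E s t a es (s e)" "\<forall>d\<in>set es. v d = 1"
      using reach \<open>e \<in> E\<close> unfolding reachable_from_def by blast
    have "set es \<subseteq> E" using a(2) by (blast dest: dpath_imp_walk walk_edges_subset)
    then have "\<forall>d\<in>set es. w d = 1"
      using a(3) w(2,3) unfolding zero_one_def by force
    then show ?thesis using a(1,2) by blast
  qed
qed

lemma extension_by_paths:
  assumes net: "network V E s t Bd" and reach: "reachable_from V E s t Bd A v" and "B \<subseteq> Bd"
    and paths: "\<forall>p\<in>set ps. \<exists>a\<in>B. \<exists>b\<in>Bd - B. dpath E s t a p b"
    and disj: "disjoint_family_on (\<lambda>i. set (ps ! i)) {..<length ps}"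
    and unused: "\<forall>p\<in>set ps. \<forall>e\<in>set p. v e = 0"
  defines "w \<equiv> \<lambda>e. v e + path_multiplicity ps e"
  shows "is_flow V E s t Bd w" "zero_one E w" "reachable_from V E s t Bd (A \<union> B) w"
proof -
  have fE: "finite E" using net by (simp add: network_def)
  have v: "is_flow V E s t Bd v" "zero_one E v" using reach by (auto simp: reachable_from_def)
  define U where "U = (\<Union>p\<in>set ps. set p)"
  have mult: "path_multiplicity ps = indicator U"
    unfolding U_def by (rule path_multiplicity_disjoint[OF disj])
  show w01: "zero_one E w"
    using v(2) unused unfolding zero_one_def w_def mult U_def by (auto simp: indicator_def)
  have "is_flow V E s t Bd (path_multiplicity ps)" by (rule path_multiplicity_flow(1)[OF net \<open>B \<subseteq> Bd\<close> paths disj])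
  with v(1) w01 show wflow: "is_flow V E s t Bd w"
    unfolding w_def is_flow_iff_potential_flux[OF fE] zero_one_def potential_flux_add by auto
  have "\<exists>a\<in>B. \<exists>es. dpath E s t a es (s e) \<and> (\<forall>d\<in>set es. w d = 1)" if "e \<in> U" for e
  proof -
    obtain p where "p \<in> set ps" "e \<in> set p" using \<open>e \<in> U\<close> unfolding U_def by blast
    then obtain a b p1 p2 where "a \<in> B" "dpath E s t a (p1 @ e # p2) b" "p = p1 @ e # p2"
      using paths by (metis split_list)
    moreover have "\<forall>d\<in>set p1. w d = 1"
    proof
      fix d assume "d \<in> set p1"
      then have "d \<in> set p" using \<open>p = p1 @ e # p2\<close> by simp
      then have "d \<in> U" "v d = 0" using unused \<open>p \<in> set ps\<close> unfolding U_def by blast+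
      then show "w d = 1" by (simp add: w_def mult)
    qed
    ultimately show ?thesis by (blast dest: dpath_prefix)
  qed
  moreover have "e \<in> U" if "e \<in> E" "w e \<noteq> 0" "v e = 0" for e
    using that unfolding w_def mult by (auto simp: indicator_def)
  ultimately have "\<forall>e\<in>E. w e \<noteq> 0 \<and> v e = 0 \<longrightarrow>
      (\<exists>a\<in>B. \<exists>es. dpath E s t a es (s e) \<and> (\<forall>d\<in>set es. w d = 1))"
    by blast
  moreover have "\<forall>e\<in>E. v e \<le> w e" by (simp add: w_def mult)
  ultimately show "reachable_from V E s t Bd (A \<union> B) w"
    using reachable_from_extension[OF reach wflow w01] by blast
qed

theorem lemma2:
  fixes V :: "'v set" and E :: "'e set" and s t :: "'e \<Rightarrow> 'v"
    and Bd B1 B2 B3 :: "'v set" and v :: "'e \<Rightarrow> real"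
  assumes net: "network V E s t Bd"
    and sb: "inner_superbalanced V E s t Bd"
    and part: "Bd = B1 \<union> B2 \<union> B3" "B1 \<inter> B2 = {}" "B1 \<inter> B3 = {}" "B2 \<inter> B3 = {}"
    and S1: "maxflux V E s t Bd B1 = 0"
    and reach: "reachable_from V E s t Bd B1 v"
  shows "\<exists>w. is_flow V E s t Bd w \<and> zero_one E w \<and> (\<forall>e\<in>E. v e \<le> w e) \<and>
             is_max_flow V E s t Bd B2 (\<lambda>e. w e - v e) \<and>
             (\<exists>ps :: 'e list list.
                real (length ps) = maxflux V E s t Bd B2 \<and>
                (\<forall>p\<in>set ps. \<exists>a\<in>B2. \<exists>b\<in>Bd - B2. dpath E s t a p b) \<and>
                (\<forall>i<length ps. \<forall>j<length ps. i \<noteq> j \<longrightarrow> set (ps ! i) \<inter> set (ps ! j) = {}) \<and>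
                (\<forall>e\<in>E. w e - v e = real (card {i. i < length ps \<and> e \<in> set (ps ! i)}))) \<and>
             reachable_from V E s t Bd (B1 \<union> B2) w"
proof -
  have "B1 \<subseteq> Bd" "B2 \<subseteq> Bd" using part(1) by blast+
  then obtain ps where len: "real (length ps) = maxflux V E s t Bd B2"
    and paths: "\<forall>p\<in>set ps. \<exists>a\<in>B2. \<exists>b\<in>Bd - B2. dpath E s t a p b"
    and disj: "disjoint_family_on (\<lambda>i. set (ps ! i)) {..<length ps}"
    and unused: "\<forall>p\<in>set ps. \<forall>e\<in>set p. v e = 0"
    using disjoint_paths_attaining_maxflux[OF net sb reach eq_refl[OF S1] \<open>B1 \<subseteq> Bd\<close> \<open>B2 \<subseteq> Bd\<close> part(2)]
    by blast
  note mult = path_multiplicity_flow[OF net \<open>B2 \<subseteq> Bd\<close> paths disj]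
  define w where "w = (\<lambda>e. v e + path_multiplicity ps e)"
  note w = extension_by_paths[OF net reach \<open>B2 \<subseteq> Bd\<close> paths disj unused, folded w_def]
  have "(\<lambda>e. w e - v e) = path_multiplicity ps" by (simp add: w_def)
  then have "is_max_flow V E s t Bd B2 (\<lambda>e. w e - v e)"
    using mult len by (simp add: is_max_flow_def)
  moreover have "\<forall>i<length ps. \<forall>j<length ps. i \<noteq> j \<longrightarrow> set (ps ! i) \<inter> set (ps ! j) = {}"
    using disj by (simp add: disjoint_family_on_def)
  ultimately show ?thesis
    using w len paths by (intro exI[of _ w] conjI exI[of _ ps]) (auto simp: w_def path_multiplicity_def)
qed

end
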